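(* Let $m\ge0$ be an integer. Let $\psi\in C^\infty\big(\mathbb{R}^n\times(\mathbb{R}^n\setminus\{0\})\big)$ be positively homogeneous of degree $m-1$ in $\xi$ and satisfy $\psi(x+\tau\xi,\xi)=\psi(x,\xi)$ for all $\tau\in\mathbb{R}$. Let $\varphi$ be its restriction to $T\mathbb{S}^{n-1}$. Then for all indices $1\le i_1,j_1,\dots,i_{m+1},j_{m+1}\le n$, $$(J_{i_1j_1}\cdots J_{i_{m+1}j_{m+1}}\psi)|_{T\mathbb{S}^{n-1}}=D_1D_2\cdots D_{m+1}\varphi,$$ where $$D_l=\mathcal{J}_{i_lj_l}-(l-1)\big(\xi_{i_l}X_{j_l}-\xi_{j_l}X_{i_l}\big),$$ and the composition is taken with $D_1$ leftmost.
   Context: $T\mathbb{S}^{n-1}=\{(x,\xi):|\xi|=1,\ \langle x,\xi\rangle=0\}$. Positive homogeneity of degree $\lambda$ in $\xi$ means $\psi(x,c\xi)=c^\lambda\psi(x,\xi)$ for $c>0$. The John operators are $J_{ij}=\partial^2/\partial x^i\partial\xi^j-\partial^2/\partial x^j\partial\xi^i$. Define vector fields on $\mathbb{R}^n\times\mathbb{R}^n$ (summation over $p$) $$\tilde X_i=\partial/\partial x^i-\xi_i\xi^p\,\partial/\partial x^p,\qquad \tilde\Xi_i=\partial/\partial\xi^i-x_i\xi^p\,\partial/\partial x^p-\xi_i\xi^p\,\partial/\partial\xi^p.$$ These are tangent to $T\mathbb{S}^{n-1}$; $X_i,\Xi_i$ are their restrictions, and $\mathcal{J}_{ij}=X_i\Xi_j-X_j\Xi_i$.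 Here $\xi_i=\xi^i$ acts by multiplication. *)

theory Defs
  imports "HOL-Analysis.Analysis"
begin

type_synonym 'n phase = "(real^'n) \<times> (real^'n)"

fun Ck_on :: "nat \<Rightarrow> 'a::euclidean_space set \<Rightarrow> ('a \<Rightarrow> real) \<Rightarrow> bool" where
  "Ck_on 0 U f = continuous_on U f"
| "Ck_on (Suc k) U f = (f differentiable_on U \<and>
     (\<forall>b\<in>Basis. Ck_on k U (\<lambda>p. frechet_derivative f (at p) b)))"

definition smooth_on :: "'a::euclidean_space set \<Rightarrow> ('a \<Rightarrow> real) \<Rightarrow> bool" where
  "smooth_on U f = (\<forall>k. Ck_on k U f)"

definition dx :: "'n::finite \<Rightarrow> ('n phase \<Rightarrow> real) \<Rightarrow> 'n phase \<Rightarrow> real" where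
  "dx i f p = frechet_derivative f (at p) (axis i 1, 0)"

definition dxi :: "'n::finite \<Rightarrow> ('n phase \<Rightarrow> real) \<Rightarrow> 'n phase \<Rightarrow> real" where
  "dxi i f p = frechet_derivative f (at p) (0, axis i 1)"

definition John :: "'n::finite \<Rightarrow> 'n \<Rightarrow> ('n phase \<Rightarrow> real) \<Rightarrow> 'n phase \<Rightarrow> real" where
  "John i j f p = dx i (dxi j f) p - dx j (dxi i f) p"

definition TS :: "'n::finite phase set" where
  "TS = {(x, \<xi>). norm \<xi> = 1 \<and> x \<bullet> \<xi> = 0}"

definition tX :: "'n::finite \<Rightarrow> ('n phase \<Rightarrow> real) \<Rightarrow> 'n phase \<Rightarrow> real" where
  "tX i f p = dx i f p - snd p $ i * (\<Sum>k\<in>UNIV. snd p $ k * dx k f p)"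

definition tXi :: "'n::finite \<Rightarrow> ('n phase \<Rightarrow> real) \<Rightarrow> 'n phase \<Rightarrow> real" where
  "tXi i f p = dxi i f p - fst p $ i * (\<Sum>k\<in>UNIV. snd p $ k * dx k f p)
                         - snd p $ i * (\<Sum>k\<in>UNIV. snd p $ k * dxi k f p)"

text \<open>Functions on T S^{n-1} are represented by functions on R^n x R^n of which only the
 values on TS matter.  To apply the restricted fields X_i, Xi_i we extend such a function
 smoothly off TS by composing with the smooth retraction
 (x,xi) |-> (x - (x.xi/|xi|^2) xi, xi/|xi|) onto TS (defined for xi /= 0).
 Since the tilde fields are tangent to TS, the result on TS does not depend on the extension.\<close>
definition ext :: "('n::finite phase \<Rightarrow> real) \<Rightarrow> 'n phase \<Rightarrow> real" where
  "ext g p = g (fst p - ((fst p \<bullet> snd p) / (snd p \<bullet> snd p)) *\<^sub>R snd p,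
                (1 / norm (snd p)) *\<^sub>R snd p)"

definition rX :: "'n::finite \<Rightarrow> ('n phase \<Rightarrow> real) \<Rightarrow> 'n phase \<Rightarrow> real" where
  "rX i g = tX i (ext g)"

definition rXi :: "'n::finite \<Rightarrow> ('n phase \<Rightarrow> real) \<Rightarrow> 'n phase \<Rightarrow> real" where
  "rXi i g = tXi i (ext g)"

definition rJohn :: "'n::finite \<Rightarrow> 'n \<Rightarrow> ('n phase \<Rightarrow> real) \<Rightarrow> 'n phase \<Rightarrow> real" where
  "rJohn i j g p = rX i (rXi j g) p - rX j (rXi i g) p"

definition Dop :: "(nat \<Rightarrow> 'n::finite) \<Rightarrow> (nat \<Rightarrow> 'n) \<Rightarrow> nat \<Rightarrow> ('n phase \<Rightarrow> real) \<Rightarrow> 'n phase \<Rightarrow> real" where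
  "Dop I J l g p = rJohn (I l) (J l) g p
     - (real l - 1) * (snd p $ (I l) * rX (J l) g p - snd p $ (J l) * rX (I l) g p)"

end

theory Submission
  imports Defs
begin

text \<open>
Let f be smooth on xi /= 0, homogeneous of degree lam in xi and constant along the lines
x + tau xi. Its extension off TS through the retraction (x, xi) |-> (x - (x.xi/|xi|^2) xi, xi/|xi|)
is |xi|^(-lam) f, which is again constant along lines but homogeneous of degree 0. Hence the
Euler terms of the tilde fields drop out: Xi_j acts on it as d/dxi^j and X_i as d/dx^i.
Differentiating once more, with d/dxi^j f (x + tau xi, xi) = d/dxi^j f (x, xi) - tau d/dx^j f (x, xi),
gives on TS
  J_ij f = calJ_ij f - (lam + 1) (xi_i X_j f - xi_j X_i f).
The John operators preserve smoothness and invariance along lines (by symmetry of the second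
x-derivatives) and lower the degree by one, so J_(l+1) ... J_(m+1) psi has degree l - 2 and the
identity turns J_l into D_l. As D_l only sees values on TS, induction on l concludes.
\<close>

section \<open>Directional derivatives and symmetry of second derivatives\<close>

lemma frechet_derivative_cong_open:
  assumes "open U" "q \<in> U" "\<And>y. y \<in> U \<Longrightarrow> F y = G y"
  shows "frechet_derivative F (at q) = frechet_derivative G (at q)"
proof -
  have "(F has_derivative D) (at q) \<longleftrightarrow> (G has_derivative D) (at q)" for D
    using has_derivative_transform_within_open[OF _ assms(1,2), of F _ UNIV G]
      has_derivative_transform_within_open[OF _ assms(1,2), of G _ UNIV F] assms(3)
    by auto
  then show ?thesis
    unfolding frechet_derivative_def by simp
qed

lemma differentiable_cong_open:
  assumes "f differentiable at q" "open U" "q \<in> U" "\<And>y. y \<in> U \<Longrightarrow> f y = g y"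
  shows "g differentiable at q"
  using assms has_derivative_transform_within_open unfolding differentiable_def by blast

lemma has_real_derivative_along_line:
  fixes F :: "'a::real_normed_vector \<Rightarrow> real"
  assumes "(F has_derivative D) (at (q + t *\<^sub>R v))"
  shows "((\<lambda>s. F (q + s *\<^sub>R v)) has_real_derivative D v) (at t)"
proof -
  have "((\<lambda>s. q + s *\<^sub>R v) has_derivative (\<lambda>s. s *\<^sub>R v)) (at t)"
    by (auto intro!: derivative_eq_intros)
  from has_derivative_compose[OF this assms]
  have "((\<lambda>s. F (q + s *\<^sub>R v)) has_derivative (\<lambda>s. D (s *\<^sub>R v))) (at t)" .
  moreover have "(\<lambda>s. D (s *\<^sub>R v)) = (*) (D v)"
    using linear_scale[OF has_derivative_linear[OF assms]] by (auto simp: mult.commute)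
  ultimately show ?thesis
    unfolding has_field_derivative_def by simp
qed

lemma derivative_along_line_unique:
  fixes F :: "'a::real_normed_vector \<Rightarrow> real"
  assumes "(F has_derivative D) (at q)" "(\<phi> has_real_derivative c) (at 0)" "d > 0"
    and "\<And>t. \<bar>t\<bar> < d \<Longrightarrow> F (q + t *\<^sub>R v) = \<phi> t"
  shows "D v = c"
proof -
  have "((\<lambda>s. F (q + s *\<^sub>R v)) has_real_derivative D v) (at 0)"
    using has_real_derivative_along_line[of F D q 0 v] assms(1) by simp
  then have "(\<phi> has_real_derivative D v) (at 0)"
    by (rule has_field_derivative_transform_within_open[of _ _ _ "ball 0 d"])
      (use assms(3,4) in \<open>auto simp: dist_norm\<close>)
  then show ?thesis
    using DERIV_unique assms(2) by blast
qed

lemma second_difference_mean_value: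
  fixes f :: "'a::real_normed_vector \<Rightarrow> real"
  assumes s: "s > 0"
    and df: "\<And>\<sigma> \<tau>. \<sigma> \<in> {0..s} \<Longrightarrow> \<tau> \<in> {0..s} \<Longrightarrow>
       (f has_derivative Df (q + \<sigma> *\<^sub>R u + \<tau> *\<^sub>R v)) (at (q + \<sigma> *\<^sub>R u + \<tau> *\<^sub>R v))"
    and du: "\<And>\<sigma> \<tau>. \<sigma> \<in> {0..s} \<Longrightarrow> \<tau> \<in> {0..s} \<Longrightarrow>
       ((\<lambda>z. Df z u) has_derivative Du (q + \<sigma> *\<^sub>R u + \<tau> *\<^sub>R v)) (at (q + \<sigma> *\<^sub>R u + \<tau> *\<^sub>R v))"
  shows "\<exists>\<sigma>\<in>{0..s}. \<exists>\<tau>\<in>{0..s}.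
     f (q + s *\<^sub>R u + s *\<^sub>R v) - f (q + s *\<^sub>R u) - f (q + s *\<^sub>R v) + f q
       = s * s * Du (q + \<sigma> *\<^sub>R u + \<tau> *\<^sub>R v) v"
proof -
  define k where "k \<sigma> = f (q + \<sigma> *\<^sub>R u + s *\<^sub>R v) - f (q + \<sigma> *\<^sub>R u + 0 *\<^sub>R v)" for \<sigma>
  have "(k has_real_derivative Df (q + \<sigma> *\<^sub>R u + s *\<^sub>R v) u - Df (q + \<sigma> *\<^sub>R u + 0 *\<^sub>R v) u) (at \<sigma>)"
    if "0 \<le> \<sigma>" "\<sigma> \<le> s" for \<sigma>
  proof -
    have "((\<lambda>\<sigma>. f ((q + \<tau> *\<^sub>R v) + \<sigma> *\<^sub>R u)) has_real_derivative Df (q + \<sigma> *\<^sub>R u + \<tau> *\<^sub>R v) u)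
        (at \<sigma>)" if "\<tau> \<in> {0..s}" for \<tau>
      using has_real_derivative_along_line[of f _ "q + \<tau> *\<^sub>R v" \<sigma> u] df[of \<sigma> \<tau>] that
        \<open>0 \<le> \<sigma>\<close> \<open>\<sigma> \<le> s\<close>
      by (simp add: algebra_simps)
    from DERIV_diff[OF this[of s] this[of 0]] show ?thesis
      unfolding k_def using s by (simp add: algebra_simps)
  qed
  from MVT2[OF s this] obtain \<sigma> where \<sigma>: "0 < \<sigma>" "\<sigma> < s"
    and k: "k s - k 0 = s * (Df (q + \<sigma> *\<^sub>R u + s *\<^sub>R v) u - Df (q + \<sigma> *\<^sub>R u + 0 *\<^sub>R v) u)"
    by auto
  define l where "l \<tau> = Df (q + \<sigma> *\<^sub>R u + \<tau> *\<^sub>R v) u" for \<tau>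
  have "(l has_real_derivative Du (q + \<sigma> *\<^sub>R u + \<tau> *\<^sub>R v) v) (at \<tau>)" if "0 \<le> \<tau>" "\<tau> \<le> s" for \<tau>
    using has_real_derivative_along_line[of "\<lambda>z. Df z u" _ "q + \<sigma> *\<^sub>R u" \<tau> v]
      du[of \<sigma> \<tau>] that \<sigma> unfolding l_def by simp
  from MVT2[OF s this] obtain \<tau> where \<tau>: "0 < \<tau>" "\<tau> < s"
    and l: "l s - l 0 = s * Du (q + \<sigma> *\<^sub>R u + \<tau> *\<^sub>R v) v"
    by auto
  have "f (q + s *\<^sub>R u + s *\<^sub>R v) - f (q + s *\<^sub>R u) - f (q + s *\<^sub>R v) + f q = k s - k 0"
    unfolding k_def by simp
  also have "\<dots> = s * s * Du (q + \<sigma> *\<^sub>R u + \<tau> *\<^sub>R v) v"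
    using k l unfolding l_def by simp
  finally have "f (q + s *\<^sub>R u + s *\<^sub>R v) - f (q + s *\<^sub>R u) - f (q + s *\<^sub>R v) + f q
      = s * s * Du (q + \<sigma> *\<^sub>R u + \<tau> *\<^sub>R v) v" .
  then show ?thesis
    using \<sigma> \<tau> by (metis atLeastAtMost_iff less_eq_real_def)
qed

lemma parallelogram_in_ball:
  fixes q u v :: "'a::real_normed_vector"
  assumes "d > 0"
  obtains s where "s > 0" "\<And>\<sigma> \<tau>. \<sigma> \<in> {0..s} \<Longrightarrow> \<tau> \<in> {0..s} \<Longrightarrow> q + \<sigma> *\<^sub>R u + \<tau> *\<^sub>R v \<in> ball q d"
proof
  define N where "N = norm u + norm v + 1"
  have N: "N > 0"
    unfolding N_def by (smt (verit) norm_ge_zero)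
  show "d / (2 * N) > 0"
    using assms N by simp
  fix \<sigma> \<tau> assume "\<sigma> \<in> {0..d / (2 * N)}" "\<tau> \<in> {0..d / (2 * N)}"
  then have "norm (\<sigma> *\<^sub>R u + \<tau> *\<^sub>R v) \<le> d / (2 * N) * norm u + d / (2 * N) * norm v"
    by (smt (verit, best) atLeastAtMost_iff mult_right_mono norm_ge_zero norm_scaleR norm_triangle_ineq)
  also have "\<dots> = d / (2 * N) * (N - 1)"
    by (simp add: N_def distrib_left)
  also have "\<dots> < d"
    using assms N by (simp add: field_simps add_pos_pos)
  finally show "q + \<sigma> *\<^sub>R u + \<tau> *\<^sub>R v \<in> ball q d"
    by (metis add.assoc add_diff_cancel_left' dist_commute dist_norm mem_ball)
qed

lemma second_difference_approx:
  fixes f :: "'a::real_normed_vector \<Rightarrow> real"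
  assumes U: "open U" "q \<in> U"
    and df: "\<And>y. y \<in> U \<Longrightarrow> (f has_derivative Df y) (at y)"
    and du: "\<And>y. y \<in> U \<Longrightarrow> ((\<lambda>z. Df z u) has_derivative Du y) (at y)"
    and cu: "continuous_on U (\<lambda>y. Du y v)" and "e > 0"
  obtains s where "s > 0" "\<And>t. 0 < t \<Longrightarrow> t \<le> s \<Longrightarrow>
      \<bar>f (q + t *\<^sub>R u + t *\<^sub>R v) - f (q + t *\<^sub>R u) - f (q + t *\<^sub>R v) + f q - t * t * Du q v\<bar> < e * (t * t)"
proof -
  obtain d0 where "d0 > 0" "ball q d0 \<subseteq> U"
    using U open_contains_ball by blast
  moreover obtain d1 where "d1 > 0" "(\<lambda>y. Du y v) ` ball q d1 \<subseteq> ball (Du q v) e"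
    using continuous_at_ball \<open>e > 0\<close> cu U continuous_on_eq_continuous_at by metis
  ultimately obtain d where d: "d > 0" "ball q d \<subseteq> U" "(\<lambda>y. Du y v) ` ball q d \<subseteq> ball (Du q v) e"
    by (intro that[of "min d0 d1"]) auto
  obtain s where s: "s > 0"
    and inball: "\<And>\<sigma> \<tau>. \<sigma> \<in> {0..s} \<Longrightarrow> \<tau> \<in> {0..s} \<Longrightarrow> q + \<sigma> *\<^sub>R u + \<tau> *\<^sub>R v \<in> ball q d"
    using parallelogram_in_ball[OF d(1)] by blast
  show ?thesis
  proof (rule that[OF s])
    fix t :: real
    assume t: "0 < t" "t \<le> s"
    then have in_ball: "q + \<sigma> *\<^sub>R u + \<tau> *\<^sub>R v \<in> ball q d" if "\<sigma> \<in> {0..t}" "\<tau> \<in> {0..t}" for \<sigma> \<tau>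
      using inball that by auto
    then have "q + \<sigma> *\<^sub>R u + \<tau> *\<^sub>R v \<in> U" if "\<sigma> \<in> {0..t}" "\<tau> \<in> {0..t}" for \<sigma> \<tau>
      using d(2) that by blast
    from second_difference_mean_value[OF t(1) df[OF this] du[OF this]]
    obtain \<sigma> \<tau> where in_t: "\<sigma> \<in> {0..t}" "\<tau> \<in> {0..t}"
      and eq: "f (q + t *\<^sub>R u + t *\<^sub>R v) - f (q + t *\<^sub>R u) - f (q + t *\<^sub>R v) + f q
          = t * t * Du (q + \<sigma> *\<^sub>R u + \<tau> *\<^sub>R v) v"
      by blast
    have "\<bar>Du (q + \<sigma> *\<^sub>R u + \<tau> *\<^sub>R v) v - Du q v\<bar> < e"
      using d(3) in_ball[OF in_t] by (force simp: dist_real_def)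
    then have "t * t * \<bar>Du (q + \<sigma> *\<^sub>R u + \<tau> *\<^sub>R v) v - Du q v\<bar> < e * (t * t)"
      using t by simp
    then show "\<bar>f (q + t *\<^sub>R u + t *\<^sub>R v) - f (q + t *\<^sub>R u) - f (q + t *\<^sub>R v) + f q
        - t * t * Du q v\<bar> < e * (t * t)"
      unfolding eq right_diff_distrib[symmetric] abs_mult by simp
  qed
qed

lemma mixed_derivatives_commute:
  fixes f :: "'a::real_normed_vector \<Rightarrow> real"
  assumes U: "open U" "q \<in> U"
    and df: "\<And>y. y \<in> U \<Longrightarrow> (f has_derivative Df y) (at y)"
    and du: "\<And>y. y \<in> U \<Longrightarrow> ((\<lambda>z. Df z u) has_derivative Du y) (at y)"
    and dv: "\<And>y. y \<in> U \<Longrightarrow> ((\<lambda>z. Df z v) has_derivative Dv y) (at y)"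
    and cu: "continuous_on U (\<lambda>y. Du y v)"
    and cv: "continuous_on U (\<lambda>y. Dv y u)"
  shows "Du q v = Dv q u"
proof (rule ccontr)
  assume "Du q v \<noteq> Dv q u"
  then have e: "\<bar>Du q v - Dv q u\<bar> / 2 > 0"
    by simp
  obtain s1 where s1: "s1 > 0" "\<And>t. 0 < t \<Longrightarrow> t \<le> s1 \<Longrightarrow>
      \<bar>f (q + t *\<^sub>R u + t *\<^sub>R v) - f (q + t *\<^sub>R u) - f (q + t *\<^sub>R v) + f q - t * t * Du q v\<bar>
        < \<bar>Du q v - Dv q u\<bar> / 2 * (t * t)"
    using second_difference_approx[OF U df du cu e] by blast
  obtain s2 where s2: "s2 > 0" "\<And>t. 0 < t \<Longrightarrow> t \<le> s2 \<Longrightarrow>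
      \<bar>f (q + t *\<^sub>R v + t *\<^sub>R u) - f (q + t *\<^sub>R v) - f (q + t *\<^sub>R u) + f q - t * t * Dv q u\<bar>
        < \<bar>Du q v - Dv q u\<bar> / 2 * (t * t)"
    using second_difference_approx[OF U df dv cv e] by blast
  define t where "t = min s1 s2"
  have t: "t > 0" "t \<le> s1" "t \<le> s2"
    using s1(1) s2(1) by (auto simp: t_def)
  define \<Delta> where "\<Delta> = f (q + t *\<^sub>R u + t *\<^sub>R v) - f (q + t *\<^sub>R u) - f (q + t *\<^sub>R v) + f q"
  have "q + t *\<^sub>R v + t *\<^sub>R u = q + t *\<^sub>R u + t *\<^sub>R v"
    by (simp add: algebra_simps)
  then have \<Delta>: "\<bar>\<Delta> - t * t * Du q v\<bar> < \<bar>Du q v - Dv q u\<bar> / 2 * (t * t)"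
      "\<bar>\<Delta> - t * t * Dv q u\<bar> < \<bar>Du q v - Dv q u\<bar> / 2 * (t * t)"
    using s1(2)[OF t(1,2)] s2(2)[OF t(1,3)] unfolding \<Delta>_def by (simp_all add: algebra_simps)
  have "t * t * \<bar>Du q v - Dv q u\<bar> = \<bar>(\<Delta> - t * t * Dv q u) - (\<Delta> - t * t * Du q v)\<bar>"
    using t(1) by (simp add: abs_mult right_diff_distrib[symmetric])
  also have "\<dots> < \<bar>Du q v - Dv q u\<bar> * (t * t)"
    using \<Delta> by linarith
  finally show False
    by simp
qed

section \<open>Smooth functions and partial derivatives on phase space\<close>

lemma smooth_on_has_derivative:
  assumes "smooth_on U f" "open U" "q \<in> U"
  shows "(f has_derivative frechet_derivative f (at q)) (at q)"
proof -
  have "Ck_on (Suc 0) U f"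
    using assms(1) unfolding smooth_on_def by blast
  then have "f differentiable at q"
    using assms(2,3) differentiable_on_eq_differentiable_at by auto
  then show ?thesis
    using frechet_derivative_works by blast
qed

lemma smooth_on_imp_continuous_on: "smooth_on U f \<Longrightarrow> continuous_on U f"
  unfolding smooth_on_def using Ck_on.simps(1) by blast

lemma smooth_on_partial:
  assumes "smooth_on U f" "b \<in> Basis"
  shows "smooth_on U (\<lambda>p. frechet_derivative f (at p) b)"
  using assms unfolding smooth_on_def by (metis Ck_on.simps(2))

lemma smooth_on_dx: "smooth_on U f \<Longrightarrow> smooth_on U (dx i f)"
  and smooth_on_dxi: "smooth_on U f \<Longrightarrow> smooth_on U (dxi i f)"
  using smooth_on_partial[of U f "(axis i 1, 0)"] smooth_on_partial[of U f "(0, axis i 1)"]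
  by (auto simp: Basis_prod_def dx_def[abs_def] dxi_def[abs_def])

lemma Ck_on_cong_open:
  assumes "open U" "\<And>y. y \<in> U \<Longrightarrow> f y = g y" "Ck_on k U f"
  shows "Ck_on k U g"
  using assms
proof (induction k arbitrary: f g)
  case 0
  then show ?case
    using continuous_on_cong[OF refl, of U f g] by simp
next
  case (Suc k)
  have "f differentiable_on U"
    using Suc.prems(3) by simp
  then have "g differentiable at y" if "y \<in> U" for y
    using differentiable_cong_open[of f y U g, OF _ Suc.prems(1) that Suc.prems(2)] that
    unfolding differentiable_on_eq_differentiable_at[OF Suc.prems(1)] by blast
  then have "g differentiable_on U"
    unfolding differentiable_on_eq_differentiable_at[OF Suc.prems(1)] by blast
  moreover have "Ck_on k U (\<lambda>p. frechet_derivative g (at p) b)" if "b \<in> Basis" for b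
  proof (rule Suc.IH[OF Suc.prems(1)])
    show "Ck_on k U (\<lambda>p. frechet_derivative f (at p) b)"
      using Suc.prems(3) that by simp
    show "\<And>y. y \<in> U \<Longrightarrow> frechet_derivative f (at y) b = frechet_derivative g (at y) b"
      using frechet_derivative_cong_open[OF Suc.prems(1) _ Suc.prems(2)] by simp
  qed
  ultimately show ?case
    by simp
qed

lemma Ck_on_diff:
  assumes "open U" "Ck_on k U f" "Ck_on k U g"
  shows "Ck_on k U (\<lambda>p. f p - g p)"
  using assms
proof (induction k arbitrary: f g)
  case 0
  then show ?case
    by (simp add: continuous_on_diff)
next
  case (Suc k)
  have df: "f differentiable_on U" and dg: "g differentiable_on U"
    using Suc.prems by auto
  have "Ck_on k U (\<lambda>p. frechet_derivative (\<lambda>p. f p - g p) (at p) b)" if b: "b \<in> Basis" for b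
  proof (rule Ck_on_cong_open[OF Suc.prems(1)])
    show "Ck_on k U (\<lambda>p. frechet_derivative f (at p) b - frechet_derivative g (at p) b)"
      using Suc.IH[OF Suc.prems(1)] Suc.prems b by simp
    fix y assume "y \<in> U"
    then have "f differentiable at y" "g differentiable at y"
      using df dg Suc.prems(1) differentiable_on_eq_differentiable_at by blast+
    then have "((\<lambda>p. f p - g p) has_derivative
        (\<lambda>h. frechet_derivative f (at y) h - frechet_derivative g (at y) h)) (at y)"
      by (intro has_derivative_diff) (simp_all add: frechet_derivative_works[symmetric])
    from fun_cong[OF frechet_derivative_at[OF this], of b]
    show "frechet_derivative f (at y) b - frechet_derivative g (at y) b
        = frechet_derivative (\<lambda>p. f p - g p) (at y) b"
      by simp
  qed
  then show ?case
    using differentiable_on_diff[OF df dg] by simp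
qed

lemma smooth_on_John:
  assumes "open U" "smooth_on U f"
  shows "smooth_on U (John i j f)"
  using Ck_on_diff[OF assms(1)] smooth_on_dx smooth_on_dxi assms(2)
  unfolding smooth_on_def John_def[abs_def] by blast

lemma dx_commute:
  assumes "smooth_on U f" "open U" "q \<in> U"
  shows "dx i (dx j f) q = dx j (dx i f) q"
proof -
  have D: "((\<lambda>z. frechet_derivative f (at z) (axis k 1, 0)) has_derivative
      frechet_derivative (dx k f) (at y)) (at y)" if "y \<in> U" for k y
    using smooth_on_has_derivative[OF smooth_on_dx[OF assms(1)] assms(2) that]
    by (simp add: dx_def[abs_def])
  have C: "continuous_on U (\<lambda>y. frechet_derivative (dx k f) (at y) (axis l 1, 0))" for k l
    using smooth_on_imp_continuous_on[OF smooth_on_dx[OF smooth_on_dx[OF assms(1)]]]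
    by (simp add: dx_def[abs_def])
  have "frechet_derivative (dx j f) (at q) (axis i 1, 0) = frechet_derivative (dx i f) (at q) (axis j 1, 0)"
    by (rule mixed_derivatives_commute[OF assms(2,3)])
      (use smooth_on_has_derivative[OF assms(1,2)] D C in auto)
  then show ?thesis
    by (simp add: dx_def)
qed

abbreviation \<Omega> :: "'n::finite phase set" where
  "\<Omega> \<equiv> UNIV \<times> (UNIV - {0})"

lemma open_\<Omega>: "open \<Omega>"
  by (intro open_Times) auto

lemma smooth_on_differentiable_at:
  assumes "smooth_on \<Omega> f" "q \<in> \<Omega>"
  shows "f differentiable at q"
  using smooth_on_has_derivative[OF assms(1) open_\<Omega> assms(2)] differentiableI by blast

lemma dx_has_derivative: "(F has_derivative D) (at p) \<Longrightarrow> dx k F p = D (axis k 1, 0)"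
  and dxi_has_derivative: "(F has_derivative D) (at p) \<Longrightarrow> dxi k F p = D (0, axis k 1)"
  unfolding dx_def dxi_def by (metis frechet_derivative_at)+

lemma sum_dx_has_derivative:
  fixes F :: "'n::finite phase \<Rightarrow> real"
  assumes "(F has_derivative D) (at p)"
  shows "(\<Sum>k\<in>UNIV. c $ k * dx k F p) = D (c, 0)"
    and "(\<Sum>k\<in>UNIV. c $ k * dxi k F p) = D (0, c)"
proof -
  have l: "linear D"
    using assms has_derivative_linear by blast
  have e1: "(c, 0) = (\<Sum>k\<in>UNIV. c $ k *\<^sub>R (axis k 1, 0::real^'n))"
    using basis_expansion[of c] by (simp add: fst_sum snd_sum prod_eq_iff scalar_mult_eq_scaleR)
  have e2: "(0, c) = (\<Sum>k\<in>UNIV. c $ k *\<^sub>R (0::real^'n, axis k 1))"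
    using basis_expansion[of c] by (simp add: fst_sum snd_sum prod_eq_iff scalar_mult_eq_scaleR)
  show "(\<Sum>k\<in>UNIV. c $ k * dx k F p) = D (c, 0)"
    unfolding e1 linear_sum[OF l] linear_scale[OF l] dx_has_derivative[OF assms] by simp
  show "(\<Sum>k\<in>UNIV. c $ k * dxi k F p) = D (0, c)"
    unfolding e2 linear_sum[OF l] linear_scale[OF l] dxi_has_derivative[OF assms] by simp
qed

section \<open>Homogeneity in xi and invariance along lines\<close>

definition homogeneous :: "real \<Rightarrow> ('n::finite phase \<Rightarrow> real) \<Rightarrow> bool" where
  "homogeneous lam f \<longleftrightarrow> (\<forall>x \<xi> c. \<xi> \<noteq> 0 \<longrightarrow> c > 0 \<longrightarrow> f (x, c *\<^sub>R \<xi>) = c powr lam * f (x, \<xi>))"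

definition line_invariant :: "('n::finite phase \<Rightarrow> real) \<Rightarrow> bool" where
  "line_invariant f \<longleftrightarrow> (\<forall>x \<xi> \<tau>. \<xi> \<noteq> 0 \<longrightarrow> f (x + \<tau> *\<^sub>R \<xi>, \<xi>) = f (x, \<xi>))"

lemma has_derivative_compose_linear_open:
  fixes L :: "'a::euclidean_space \<Rightarrow> 'b::euclidean_space"
  assumes "linear L" "open U" "q \<in> U" "\<And>y. y \<in> U \<Longrightarrow> F y = G (L y)"
    and "(G has_derivative DG) (at (L q))"
  shows "(F has_derivative (\<lambda>h. DG (L h))) (at q)"
proof -
  have "bounded_linear L"
    using assms(1) linear_conv_bounded_linear by auto
  then have "(L has_derivative L) (at q)"
    by (rule bounded_linear_imp_has_derivative)
  from has_derivative_compose[OF this assms(5)] show ?thesis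
    by (rule has_derivative_transform_within_open[OF _ assms(2,3)]) (use assms(4) in auto)
qed

lemma dx_dxi_compose_shear:
  fixes F G :: "'n::finite phase \<Rightarrow> real"
  assumes "open U" "q \<in> U" "\<And>y. y \<in> U \<Longrightarrow> F y = G (fst y + \<tau> *\<^sub>R snd y, snd y)"
    and "G differentiable at (fst q + \<tau> *\<^sub>R snd q, snd q)"
  shows "dx k F q = dx k G (fst q + \<tau> *\<^sub>R snd q, snd q)"
    and "dxi k F q = \<tau> * dx k G (fst q + \<tau> *\<^sub>R snd q, snd q) + dxi k G (fst q + \<tau> *\<^sub>R snd q, snd q)"
proof -
  let ?L = "\<lambda>y::'n phase. (fst y + \<tau> *\<^sub>R snd y, snd y)"
  have "linear ?L"
    by (auto intro!: linearI simp: algebra_simps)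
  moreover obtain DG where DG: "(G has_derivative DG) (at (?L q))"
    using assms(4) unfolding differentiable_def by blast
  ultimately have DF: "(F has_derivative (\<lambda>h. DG (?L h))) (at q)"
    using has_derivative_compose_linear_open assms(1-3) by blast
  have lin: "linear DG"
    using DG has_derivative_linear by blast
  have "DG (?L (0, axis k 1)) = DG (\<tau> *\<^sub>R (axis k 1, 0) + (0, axis k 1))"
    by simp
  also have "\<dots> = \<tau> * DG (axis k 1, 0) + DG (0, axis k 1)"
    unfolding linear_add[OF lin] linear_scale[OF lin] by simp
  finally show "dx k F q = dx k G (?L q)" "dxi k F q = \<tau> * dx k G (?L q) + dxi k G (?L q)"
    by (simp_all add: dx_has_derivative[OF DF] dxi_has_derivative[OF DF]
        dx_has_derivative[OF DG] dxi_has_derivative[OF DG])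
qed

lemma dx_dxi_compose_dilation:
  fixes F G :: "'n::finite phase \<Rightarrow> real"
  assumes "open U" "q \<in> U" "\<And>y. y \<in> U \<Longrightarrow> F y = G (fst y, c *\<^sub>R snd y)"
    and "G differentiable at (fst q, c *\<^sub>R snd q)"
  shows "dx k F q = dx k G (fst q, c *\<^sub>R snd q)"
    and "dxi k F q = c * dxi k G (fst q, c *\<^sub>R snd q)"
proof -
  let ?L = "\<lambda>y::'n phase. (fst y, c *\<^sub>R snd y)"
  have "linear ?L"
    by (auto intro!: linearI simp: algebra_simps)
  moreover obtain DG where DG: "(G has_derivative DG) (at (?L q))"
    using assms(4) unfolding differentiable_def by blast
  ultimately have DF: "(F has_derivative (\<lambda>h. DG (?L h))) (at q)"
    using has_derivative_compose_linear_open assms(1-3) by blast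
  have lin: "linear DG"
    using DG has_derivative_linear by blast
  have "DG (?L (0, axis k 1)) = DG (c *\<^sub>R (0, axis k 1))"
    by simp
  also have "\<dots> = c * DG (0, axis k 1)"
    unfolding linear_scale[OF lin] by simp
  finally show "dx k F q = dx k G (?L q)" "dxi k F q = c * dxi k G (?L q)"
    by (simp_all add: dx_has_derivative[OF DF] dxi_has_derivative[OF DF]
        dx_has_derivative[OF DG] dxi_has_derivative[OF DG])
qed

lemma homogeneous_dx_dxi:
  fixes f :: "'n::finite phase \<Rightarrow> real"
  assumes diff: "\<And>q. q \<in> \<Omega> \<Longrightarrow> f differentiable at q" and hom: "homogeneous lam f"
  shows "homogeneous lam (dx k f)" "homogeneous (lam - 1) (dxi k f)"
proof -
  have "dx k f (x, c *\<^sub>R \<xi>) = c powr lam * dx k f (x, \<xi>) \<and>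
      dxi k f (x, c *\<^sub>R \<xi>) = c powr (lam - 1) * dxi k f (x, \<xi>)"
    if "\<xi> \<noteq> 0" "c > 0" for x \<xi> and c :: real
  proof -
    let ?F = "\<lambda>y. c powr lam * f y"
    have q: "(x, \<xi>) \<in> \<Omega>" "(x, c *\<^sub>R \<xi>) \<in> \<Omega>"
      using that by auto
    have "?F y = f (fst y, c *\<^sub>R snd y)" if "y \<in> \<Omega>" for y
      using hom that \<open>c > 0\<close> unfolding homogeneous_def by (cases y) auto
    then have "dx k ?F (x, \<xi>) = dx k f (x, c *\<^sub>R \<xi>)" "dxi k ?F (x, \<xi>) = c * dxi k f (x, c *\<^sub>R \<xi>)"
      using dx_dxi_compose_dilation[OF open_\<Omega> q(1), of ?F f c k] diff[OF q(2)] by simp_all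
    moreover obtain D where D: "(f has_derivative D) (at (x, \<xi>))"
      using diff[OF q(1)] unfolding differentiable_def by blast
    moreover have "(?F has_derivative (\<lambda>h. c powr lam * D h)) (at (x, \<xi>))"
      using D by (rule has_derivative_mult_right)
    ultimately show ?thesis
      using \<open>c > 0\<close> by (simp add: dx_has_derivative dxi_has_derivative powr_diff field_simps)
  qed
  then show "homogeneous lam (dx k f)" "homogeneous (lam - 1) (dxi k f)"
    unfolding homogeneous_def by auto
qed

lemma homogeneous_John:
  fixes f :: "'n::finite phase \<Rightarrow> real"
  assumes "smooth_on \<Omega> f" "homogeneous lam f"
  shows "homogeneous (lam - 1) (John i j f)"
proof -
  have "homogeneous (lam - 1) (dx k (dxi l f))" for k l
    using homogeneous_dx_dxi smooth_on_differentiable_at smooth_on_dxi assms by metis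
  then show ?thesis
    unfolding homogeneous_def John_def by (simp add: right_diff_distrib)
qed

lemma dx_dxi_along_line:
  fixes f :: "'n::finite phase \<Rightarrow> real"
  assumes diff: "\<And>q. q \<in> \<Omega> \<Longrightarrow> f differentiable at q" and inv: "line_invariant f"
    and "\<xi> \<noteq> 0"
  shows "dx k f (x + \<tau> *\<^sub>R \<xi>, \<xi>) = dx k f (x, \<xi>)"
    and "dxi k f (x + \<tau> *\<^sub>R \<xi>, \<xi>) = dxi k f (x, \<xi>) - \<tau> * dx k f (x, \<xi>)"
proof -
  have "f y = f (fst y + \<tau> *\<^sub>R snd y, snd y)" if "y \<in> \<Omega>" for y
    using inv that unfolding line_invariant_def by (cases y) auto
  then show "dx k f (x + \<tau> *\<^sub>R \<xi>, \<xi>) = dx k f (x, \<xi>)"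
    and "dxi k f (x + \<tau> *\<^sub>R \<xi>, \<xi>) = dxi k f (x, \<xi>) - \<tau> * dx k f (x, \<xi>)"
    using dx_dxi_compose_shear[OF open_\<Omega>, of "(x, \<xi>)" f f \<tau> k] diff \<open>\<xi> \<noteq> 0\<close> by auto
qed

lemma dx_of_dxi_along_line:
  fixes f :: "'n::finite phase \<Rightarrow> real"
  assumes sm: "smooth_on \<Omega> f" and inv: "line_invariant f" and "\<xi> \<noteq> 0"
  shows "dx i (dxi j f) (x, \<xi>) = dx i (dxi j f) (x + \<tau> *\<^sub>R \<xi>, \<xi>) + \<tau> * dx i (dx j f) (x + \<tau> *\<^sub>R \<xi>, \<xi>)"
proof -
  let ?s = "(x + \<tau> *\<^sub>R \<xi>, \<xi>)"
  let ?G = "\<lambda>z. dxi j f z + \<tau> * dx j f z"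
  have diff: "\<And>q. q \<in> \<Omega> \<Longrightarrow> f differentiable at q"
    using smooth_on_differentiable_at[OF sm] .
  have "dxi j f y = ?G (fst y + \<tau> *\<^sub>R snd y, snd y)" if "y \<in> \<Omega>" for y
    using that dx_dxi_along_line[OF diff inv] by (cases y) auto
  moreover have "(?G has_derivative (\<lambda>h. frechet_derivative (dxi j f) (at ?s) h
      + \<tau> * frechet_derivative (dx j f) (at ?s) h)) (at ?s)"
    using smooth_on_has_derivative[OF smooth_on_dxi[OF sm] open_\<Omega>, of ?s j]
      smooth_on_has_derivative[OF smooth_on_dx[OF sm] open_\<Omega>, of ?s j] \<open>\<xi> \<noteq> 0\<close>
    by (auto intro!: has_derivative_add has_derivative_mult_right)
  ultimately show ?thesis
    using dx_dxi_compose_shear(1)[OF open_\<Omega>, of "(x, \<xi>)" "dxi j f" ?G \<tau> i] \<open>\<xi> \<noteq> 0\<close>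
    by (auto simp: dx_has_derivative dx_def[of _ "dx j f"] dx_def[of _ "dxi j f"] differentiableI)
qed

lemma line_invariant_John:
  fixes f :: "'n::finite phase \<Rightarrow> real"
  assumes "smooth_on \<Omega> f" "line_invariant f"
  shows "line_invariant (John i j f)"
  unfolding line_invariant_def John_def
proof (intro allI impI)
  fix x \<xi> :: "real^'n" and \<tau> :: real
  assume "\<xi> \<noteq> 0"
  then have "dx i (dx j f) (x + \<tau> *\<^sub>R \<xi>, \<xi>) = dx j (dx i f) (x + \<tau> *\<^sub>R \<xi>, \<xi>)"
    using dx_commute[OF assms(1) open_\<Omega>] by simp
  then show "dx i (dxi j f) (x + \<tau> *\<^sub>R \<xi>, \<xi>) - dx j (dxi i f) (x + \<tau> *\<^sub>R \<xi>, \<xi>) =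
      dx i (dxi j f) (x, \<xi>) - dx j (dxi i f) (x, \<xi>)"
    using dx_of_dxi_along_line[OF assms \<open>\<xi> \<noteq> 0\<close>, of i j x \<tau>]
      dx_of_dxi_along_line[OF assms \<open>\<xi> \<noteq> 0\<close>, of j i x \<tau>] by simp
qed

section \<open>The vector fields restricted to TS\<close>

definition retract_TS :: "'n::finite phase \<Rightarrow> 'n phase" where
  "retract_TS q = (fst q - ((fst q \<bullet> snd q) / (snd q \<bullet> snd q)) *\<^sub>R snd q, (1 / norm (snd q)) *\<^sub>R snd q)"

lemma ext_eq_retract_TS: "ext g q = g (retract_TS q)"
  by (simp add: ext_def retract_TS_def)

lemma mem_TS_iff: "q \<in> TS \<longleftrightarrow> norm (snd q) = 1 \<and> fst q \<bullet> snd q = 0"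
  by (cases q) (simp add: TS_def)

lemma TS_subset_\<Omega>: "TS \<subseteq> \<Omega>"
  by (auto simp: mem_TS_iff)

lemma retract_TS_fixes_TS: "q \<in> TS \<Longrightarrow> retract_TS q = q"
  by (simp add: mem_TS_iff retract_TS_def)

lemma retract_TS_in_TS:
  assumes "q \<in> \<Omega>"
  shows "retract_TS q \<in> TS"
proof -
  obtain x \<xi> where q: "q = (x, \<xi>)" "\<xi> \<noteq> 0"
    using assms by (cases q) auto
  have ii: "\<xi> \<bullet> \<xi> = (norm \<xi>)\<^sup>2"
    by (simp add: power2_norm_eq_inner)
  have "(x - ((x \<bullet> \<xi>) / (\<xi> \<bullet> \<xi>)) *\<^sub>R \<xi>) \<bullet> ((1 / norm \<xi>) *\<^sub>R \<xi>) = 0"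
    using q(2) unfolding inner_diff_left inner_scaleR_left inner_scaleR_right ii
    by (simp add: field_simps power2_eq_square inner_commute)
  then show ?thesis
    using q by (simp add: mem_TS_iff retract_TS_def)
qed

lemma retract_TS_differentiable:
  assumes "q \<in> \<Omega>"
  shows "retract_TS differentiable at q"
proof -
  have "snd q \<noteq> 0"
    using assms by auto
  have norm_snd: "((\<lambda>y. norm (snd y)) has_derivative (\<lambda>h. snd h \<bullet> sgn (snd q))) (at q)"
    using has_derivative_compose[OF has_derivative_snd[OF has_derivative_ident]
        has_derivative_norm[OF \<open>snd q \<noteq> 0\<close>]] by simp
  have "\<exists>D. (retract_TS has_derivative D) (at q)"
    unfolding retract_TS_def
    by (intro exI) (use norm_snd \<open>snd q \<noteq> 0\<close> in \<open>auto intro!: derivative_eq_intros\<close>)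
  then show ?thesis
    unfolding differentiable_def .
qed

lemma tX_cong_open:
  fixes F G :: "'n::finite phase \<Rightarrow> real"
  assumes "open U" "p \<in> U" "\<And>y. y \<in> U \<Longrightarrow> F y = G y"
  shows "tX i F p = tX i G p" "tXi i F p = tXi i G p"
  using frechet_derivative_cong_open[OF assms] by (simp_all add: tX_def tXi_def dx_def dxi_def)

lemma Dop_cong_TS:
  fixes g1 g2 :: "'n::finite phase \<Rightarrow> real"
  assumes "\<And>q. q \<in> TS \<Longrightarrow> g1 q = g2 q" "q \<in> \<Omega>"
  shows "Dop I J l g1 q = Dop I J l g2 q"
proof -
  have "ext g1 y = ext g2 y" if "y \<in> \<Omega>" for y
    using assms(1) retract_TS_in_TS[OF that] by (simp add: ext_eq_retract_TS)
  then have rX: "rX k g1 y = rX k g2 y" "rXi k g1 y = rXi k g2 y" if "y \<in> \<Omega>" for y k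
    unfolding rX_def rXi_def using tX_cong_open[OF open_\<Omega> that] by blast+
  have "ext (rXi k g1) y = ext (rXi k g2) y" if "y \<in> \<Omega>" for y k
    using rX(2) retract_TS_in_TS[OF that] TS_subset_\<Omega> unfolding ext_eq_retract_TS by blast
  then have "rX k' (rXi k g1) y = rX k' (rXi k g2) y" if "y \<in> \<Omega>" for y k k'
    unfolding rX_def using tX_cong_open(1)[OF open_\<Omega> that] by blast
  then show ?thesis
    unfolding Dop_def rJohn_def using rX(1) assms(2) by simp
qed

lemma tX_has_derivative:
  fixes F :: "'n::finite phase \<Rightarrow> real"
  assumes "(F has_derivative D) (at p)"
  shows "tX i F p = D (axis i 1 - snd p $ i *\<^sub>R snd p, 0)"
proof -
  have lin: "linear D"
    using has_derivative_linear[OF assms] .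
  have "D (axis i 1 - snd p $ i *\<^sub>R snd p, 0) = D ((axis i 1, 0) - snd p $ i *\<^sub>R (snd p, 0))"
    by simp
  also have "\<dots> = D (axis i 1, 0) - snd p $ i * D (snd p, 0)"
    unfolding linear_diff[OF lin] linear_scale[OF lin] by simp
  finally show ?thesis
    using sum_dx_has_derivative(1)[OF assms, of "snd p"]
    by (simp add: tX_def dx_has_derivative[OF assms])
qed

lemma tXi_has_derivative:
  fixes F :: "'n::finite phase \<Rightarrow> real"
  assumes "(F has_derivative D) (at p)"
  shows "tXi i F p = D (0, axis i 1) - fst p $ i * D (snd p, 0) - snd p $ i * D (0, snd p)"
  using sum_dx_has_derivative[OF assms, of "snd p"]
  by (simp add: tXi_def dx_has_derivative[OF assms] dxi_has_derivative[OF assms])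

lemma tX_ext_on_TS:
  fixes U :: "'n::finite phase \<Rightarrow> real"
  assumes p: "p \<in> TS" and "U differentiable at p"
  shows "tX i (ext U) p = tX i U p"
proof -
  obtain DU where DU: "(U has_derivative DU) (at p)"
    using assms(2) unfolding differentiable_def by blast
  have "retract_TS differentiable at p"
    using retract_TS_differentiable TS_subset_\<Omega> p by blast
  moreover have "U differentiable at (retract_TS p)"
    using assms(2) retract_TS_fixes_TS[OF p] by simp
  ultimately have "(U \<circ> retract_TS) differentiable at p"
    by (rule differentiable_chain_at)
  moreover have "U \<circ> retract_TS = ext U"
    by (auto simp: ext_eq_retract_TS)
  ultimately obtain DE where DE: "(ext U has_derivative DE) (at p)"
    unfolding differentiable_def by auto
  \<comment> \<open>tX i differentiates along (a, 0), a direction tangent to TS, where ext U = U\<close>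
  define a where "a = axis i 1 - snd p $ i *\<^sub>R snd p"
  have "p + t *\<^sub>R (a, 0) \<in> TS" for t
  proof -
    have "snd p \<bullet> snd p = 1"
      using p by (simp add: mem_TS_iff power2_norm_eq_inner[symmetric])
    then have "a \<bullet> snd p = 0"
      by (simp add: a_def inner_diff_left inner_axis')
    then show ?thesis
      using p by (simp add: mem_TS_iff inner_add_left)
  qed
  then have line: "ext U (p + t *\<^sub>R (a, 0)) = U (p + t *\<^sub>R (a, 0))" for t
    by (simp add: ext_eq_retract_TS retract_TS_fixes_TS)
  have "(U has_derivative DU) (at (p + 0 *\<^sub>R (a, 0)))"
    using DU by (simp only: scale_zero_left add.right_neutral)
  then have "((\<lambda>t. U (p + t *\<^sub>R (a, 0))) has_real_derivative DU (a, 0)) (at 0)"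
    by (rule has_real_derivative_along_line)
  then have "DE (a, 0) = DU (a, 0)"
    by (rule derivative_along_line_unique[OF DE _ zero_less_one]) (rule line)
  then show ?thesis
    unfolding tX_has_derivative[OF DE] tX_has_derivative[OF DU] a_def .
qed

lemma line_invariant_derivative_along_xi:
  assumes "line_invariant F" "(F has_derivative D) (at q)" "q \<in> \<Omega>"
  shows "D (snd q, 0) = 0"
proof (rule derivative_along_line_unique[OF assms(2), of "\<lambda>_. F q" _ 1])
  show "F (q + t *\<^sub>R (snd q, 0)) = F q" for t
    using assms(1,3) unfolding line_invariant_def by (cases q) auto
qed auto

lemma homogeneous_derivative_euler:
  assumes "homogeneous lam F" "(F has_derivative D) (at q)" "q \<in> \<Omega>"
  shows "D (0, snd q) = lam * F q"
proof (rule derivative_along_line_unique[OF assms(2), of "\<lambda>t. (1 + t) powr lam * F q" _ 1])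
  show "((\<lambda>t. (1 + t) powr lam * F q) has_real_derivative lam * F q) (at 0)"
    by (auto intro!: derivative_eq_intros)
  show "F (q + t *\<^sub>R (0, snd q)) = (1 + t) powr lam * F q" if "\<bar>t\<bar> < 1" for t
  proof -
    have "q + t *\<^sub>R (0, snd q) = (fst q, (1 + t) *\<^sub>R snd q)"
      by (cases q) (simp add: algebra_simps)
    then show ?thesis
      using assms(1,3) that unfolding homogeneous_def by (cases q) auto
  qed
qed auto

lemma tX_eq_dx_if_line_invariant:
  assumes "line_invariant F" "(F has_derivative D) (at q)" "q \<in> \<Omega>"
  shows "tX i F q = dx i F q"
  using sum_dx_has_derivative(1)[OF assms(2), of "snd q"]
    line_invariant_derivative_along_xi[OF assms] by (simp add: tX_def)

lemma tXi_eq_dxi_if_line_invariant_homogeneous: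
  assumes "line_invariant F" "homogeneous lam F" "(F has_derivative D) (at q)" "q \<in> \<Omega>"
  shows "tXi i F q = dxi i F q - lam * snd q $ i * F q"
  using tXi_has_derivative[OF assms(3), of i] dxi_has_derivative[OF assms(3), of i]
    line_invariant_derivative_along_xi[OF assms(1,3,4)] homogeneous_derivative_euler[OF assms(2-4)]
  by simp

section \<open>John operators on TS\<close>

lemma has_derivative_fiber_mult:
  fixes F :: "'n::finite phase \<Rightarrow> real"
  assumes "(h has_derivative Dh) (at (snd q))" "(F has_derivative D) (at q)"
  shows "((\<lambda>y. h (snd y) * F y) has_derivative (\<lambda>w. h (snd q) * D w + Dh (snd w) * F q)) (at q)"
  using has_derivative_mult[OF has_derivative_compose[OF has_derivative_snd[OF has_derivative_ident]
        assms(1)] assms(2)]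
  by (simp add: algebra_simps)

lemma tX_fiber_mult:
  fixes F :: "'n::finite phase \<Rightarrow> real"
  assumes "(h has_derivative Dh) (at (snd q))" "(F has_derivative D) (at q)"
  shows "tX i (\<lambda>y. h (snd y) * F y) q = h (snd q) * tX i F q"
  using linear_0[OF has_derivative_linear[OF assms(1)]]
  by (simp add: tX_has_derivative[OF has_derivative_fiber_mult[OF assms]] tX_has_derivative[OF assms(2)])

lemma dxi_fiber_mult:
  fixes F :: "'n::finite phase \<Rightarrow> real"
  assumes "(h has_derivative Dh) (at (snd q))" "(F has_derivative D) (at q)"
  shows "dxi k (\<lambda>y. h (snd y) * F y) q = Dh (axis k 1) * F q + h (snd q) * dxi k F q"
  by (simp add: dxi_has_derivative[OF has_derivative_fiber_mult[OF assms]] dxi_has_derivative[OF assms(2)])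

lemma has_derivative_norm_powr:
  fixes \<eta> :: "'a::real_inner"
  assumes "\<eta> \<noteq> 0"
  shows "((\<lambda>\<zeta>. norm \<zeta> powr r) has_derivative (\<lambda>w. r * norm \<eta> powr (r - 2) * (\<eta> \<bullet> w))) (at \<eta>)"
proof -
  have n: "norm \<eta> > 0"
    using assms by simp
  have "((\<lambda>\<zeta>. norm \<zeta> powr r) has_derivative
      (\<lambda>w. norm \<eta> powr r * (0 * ln (norm \<eta>) + (w \<bullet> sgn \<eta>) * r / norm \<eta>))) (at \<eta>)"
    by (rule has_derivative_powr[OF has_derivative_norm[OF assms] has_derivative_const]) (use n in auto)
  moreover have "norm \<eta> powr r * (0 * ln (norm \<eta>) + (w \<bullet> sgn \<eta>) * r / norm \<eta>)
      = r * norm \<eta> powr (r - 2) * (\<eta> \<bullet> w)" for w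
  proof -
    have "norm \<eta> powr (r - 2) = norm \<eta> powr r / (norm \<eta> * norm \<eta>)"
      using n by (simp add: powr_diff power2_eq_square)
    then show ?thesis
      using n by (simp add: sgn_div_norm inner_commute field_simps)
  qed
  ultimately show ?thesis
    by simp
qed

lemma tX_add:
  fixes F G :: "'n::finite phase \<Rightarrow> real"
  assumes "(F has_derivative DF) (at q)" "(G has_derivative DG) (at q)"
  shows "tX i (\<lambda>y. F y + G y) q = tX i F q + tX i G q"
  by (simp add: tX_has_derivative[OF has_derivative_add[OF assms]]
      tX_has_derivative[OF assms(1)] tX_has_derivative[OF assms(2)])

lemma tX_dxi_eq_if_line_invariant:
  fixes f :: "'n::finite phase \<Rightarrow> real"
  assumes "smooth_on \<Omega> f" "line_invariant f" "q \<in> \<Omega>"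
  shows "tX i (dxi j f) q = dx i (dxi j f) q + snd q $ i * dx j f q"
proof -
  obtain x \<xi> where q: "q = (x, \<xi>)" "\<xi> \<noteq> 0"
    using assms(3) by (cases q) auto
  let ?D = "frechet_derivative (dxi j f) (at q)"
  have D: "(dxi j f has_derivative ?D) (at q)"
    using smooth_on_has_derivative[OF smooth_on_dxi[OF assms(1)] open_\<Omega> assms(3)] .
  have "?D (snd q, 0) = - dx j f q"
  proof (rule derivative_along_line_unique[OF D, of "\<lambda>t. dxi j f q - t * dx j f q" _ 1])
    show "dxi j f (q + t *\<^sub>R (snd q, 0)) = dxi j f q - t * dx j f q" for t
      using dx_dxi_along_line(2)[OF smooth_on_differentiable_at[OF assms(1)] assms(2) q(2)] q
      by simp
  qed (auto intro!: derivative_eq_intros)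
  then show ?thesis
    using sum_dx_has_derivative(1)[OF D, of "snd q"] by (simp add: tX_def)
qed

definition dehomogenize :: "real \<Rightarrow> ('n::finite phase \<Rightarrow> real) \<Rightarrow> 'n phase \<Rightarrow> real" where
  "dehomogenize lam f q = norm (snd q) powr (- lam) * f q"

lemma ext_eq_dehomogenize:
  assumes hom: "homogeneous lam f" and inv: "line_invariant f" and "q \<in> \<Omega>"
  shows "ext f q = dehomogenize lam f q"
proof -
  obtain y \<eta> where q: "q = (y, \<eta>)" "\<eta> \<noteq> 0"
    using assms(3) by (cases q) auto
  define n where "n = norm \<eta>"
  have n: "n > 0"
    using q by (simp add: n_def)
  define \<eta>' where "\<eta>' = (1 / n) *\<^sub>R \<eta>"
  have \<eta>': "\<eta>' \<noteq> 0" "\<eta> = n *\<^sub>R \<eta>'"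
    using q n by (simp_all add: \<eta>'_def)
  have "\<eta> \<bullet> \<eta> = n * n"
    by (simp add: n_def power2_norm_eq_inner[symmetric] power2_eq_square)
  then have shift: "y - ((y \<bullet> \<eta>) / (\<eta> \<bullet> \<eta>)) *\<^sub>R \<eta> = y + (- (y \<bullet> \<eta>) / n) *\<^sub>R \<eta>'"
    using n by (simp add: \<eta>'_def scaleR_scaleR field_simps)
  have "ext f q = f (y - ((y \<bullet> \<eta>) / (\<eta> \<bullet> \<eta>)) *\<^sub>R \<eta>, \<eta>')"
    by (simp add: ext_def q n_def[symmetric] \<eta>'_def)
  also have "\<dots> = f (y + (- (y \<bullet> \<eta>) / n) *\<^sub>R \<eta>', \<eta>')"
    unfolding shift ..
  also have "\<dots> = f (y, \<eta>')"
    using inv \<eta>' unfolding line_invariant_def by blast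
  also have "\<dots> = n powr (- lam) * f (y, \<eta>)"
    using hom \<eta>' n unfolding homogeneous_def by (simp add: powr_minus field_simps)
  finally show ?thesis
    by (simp add: dehomogenize_def q n_def)
qed

lemma line_invariant_dehomogenize: "line_invariant f \<Longrightarrow> line_invariant (dehomogenize lam f)"
  by (simp add: line_invariant_def dehomogenize_def)

lemma homogeneous_dehomogenize: "homogeneous lam f \<Longrightarrow> homogeneous 0 (dehomogenize lam f)"
  by (simp add: homogeneous_def dehomogenize_def powr_mult powr_minus)

lemma rX_eq_dx_on_TS:
  fixes f :: "'n::finite phase \<Rightarrow> real"
  assumes sm: "smooth_on \<Omega> f" and hom: "homogeneous lam f" and inv: "line_invariant f"
    and p: "p \<in> TS"
  shows "rX j f p = dx j f p"
proof -
  have p\<Omega>: "p \<in> \<Omega>"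
    using p TS_subset_\<Omega> by blast
  note D = smooth_on_has_derivative[OF sm open_\<Omega> p\<Omega>]
  have "rX j f p = tX j (dehomogenize lam f) p"
    unfolding rX_def using tX_cong_open(1)[OF open_\<Omega> p\<Omega>] ext_eq_dehomogenize[OF hom inv] by blast
  also have "\<dots> = norm (snd p) powr (- lam) * tX j f p"
    unfolding dehomogenize_def[abs_def] using p\<Omega>
    by (intro tX_fiber_mult[OF has_derivative_norm_powr D]) auto
  also have "\<dots> = dx j f p"
    using tX_eq_dx_if_line_invariant[OF inv D p\<Omega>] p by (simp add: mem_TS_iff)
  finally show ?thesis .
qed

lemma rXi_eq_on_\<Omega>:
  fixes f :: "'n::finite phase \<Rightarrow> real"
  assumes sm: "smooth_on \<Omega> f" and hom: "homogeneous lam f" and inv: "line_invariant f"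
    and q: "q \<in> \<Omega>"
  shows "rXi j f q = - lam * norm (snd q) powr (- lam - 2) * snd q $ j * f q
      + norm (snd q) powr (- lam) * dxi j f q"
proof -
  note D = smooth_on_has_derivative[OF sm open_\<Omega> q]
  have "snd q \<noteq> 0"
    using q by auto
  then have Dh: "((\<lambda>\<eta>. norm \<eta> powr (- lam)) has_derivative
      (\<lambda>w. - lam * norm (snd q) powr (- lam - 2) * (snd q \<bullet> w))) (at (snd q))"
    by (rule has_derivative_norm_powr)
  have "rXi j f q = tXi j (dehomogenize lam f) q"
    unfolding rXi_def using tX_cong_open(2)[OF open_\<Omega> q] ext_eq_dehomogenize[OF hom inv] by blast
  also have "\<dots> = dxi j (dehomogenize lam f) q"
    using tXi_eq_dxi_if_line_invariant_homogeneous[OF line_invariant_dehomogenize[OF inv]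
        homogeneous_dehomogenize[OF hom] _ q] has_derivative_fiber_mult[OF Dh D]
    unfolding dehomogenize_def[abs_def] by simp
  also have "\<dots> = - lam * norm (snd q) powr (- lam - 2) * snd q $ j * f q
      + norm (snd q) powr (- lam) * dxi j f q"
    unfolding dehomogenize_def[abs_def] dxi_fiber_mult[OF Dh D] by (simp add: inner_axis)
  finally show ?thesis .
qed

lemma rX_rXi_eq_on_TS:
  fixes f :: "'n::finite phase \<Rightarrow> real"
  assumes sm: "smooth_on \<Omega> f" and hom: "homogeneous lam f" and inv: "line_invariant f"
    and p: "p \<in> TS"
  shows "rX i (rXi j f) p = dx i (dxi j f) p - lam * snd p $ j * dx i f p + snd p $ i * dx j f p"
proof -
  have p\<Omega>: "p \<in> \<Omega>" and \<xi>: "norm (snd p) = 1"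
    using p TS_subset_\<Omega> by (auto simp: mem_TS_iff)
  then have "snd p \<noteq> 0"
    by auto
  define a where "a \<eta> = - lam * norm \<eta> powr (- lam - 2) * \<eta> $ j" for \<eta> :: "real^'n"
  define b where "b \<eta> = norm \<eta> powr (- lam)" for \<eta> :: "real^'n"
  define G where "G y = a (snd y) * f y + b (snd y) * dxi j f y" for y
  have rXi_G: "rXi j f y = G y" if "y \<in> \<Omega>" for y
    unfolding G_def a_def b_def using rXi_eq_on_\<Omega>[OF sm hom inv that] by simp
  have "a differentiable at (snd p)"
    unfolding a_def[abs_def] using has_derivative_norm_powr[OF \<open>snd p \<noteq> 0\<close>]
    by (intro differentiable_mult differentiable_const differentiableI
        bounded_linear_imp_differentiable[OF bounded_linear_vec_nth])
  then obtain Da where Da: "(a has_derivative Da) (at (snd p))"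
    unfolding differentiable_def by blast
  note Db = has_derivative_norm_powr[OF \<open>snd p \<noteq> 0\<close>, of "- lam", folded b_def]
  note Df = smooth_on_has_derivative[OF sm open_\<Omega> p\<Omega>]
  note Ddxi = smooth_on_has_derivative[OF smooth_on_dxi[OF sm] open_\<Omega> p\<Omega>]
  note DG = has_derivative_add[OF has_derivative_fiber_mult[OF Da Df] has_derivative_fiber_mult[OF Db Ddxi]]
  have "rXi j f differentiable at p"
    using differentiable_cong_open[OF differentiableI[OF DG] open_\<Omega> p\<Omega>] rXi_G
    unfolding G_def by metis
  then have "rX i (rXi j f) p = tX i (rXi j f) p"
    unfolding rX_def by (rule tX_ext_on_TS[OF p])
  also have "\<dots> = tX i G p"
    using tX_cong_open(1)[OF open_\<Omega> p\<Omega>] rXi_G by blast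
  also have "\<dots> = a (snd p) * tX i f p + b (snd p) * tX i (dxi j f) p"
    unfolding G_def[abs_def] tX_add[OF has_derivative_fiber_mult[OF Da Df] has_derivative_fiber_mult[OF Db Ddxi]]
      tX_fiber_mult[OF Da Df] tX_fiber_mult[OF Db Ddxi] ..
  also have "\<dots> = dx i (dxi j f) p - lam * snd p $ j * dx i f p + snd p $ i * dx j f p"
    using tX_eq_dx_if_line_invariant[OF inv Df p\<Omega>] tX_dxi_eq_if_line_invariant[OF sm inv p\<Omega>] \<xi>
    by (simp add: a_def b_def)
  finally show ?thesis .
qed

lemma John_eq_rJohn_on_TS:
  fixes f :: "'n::finite phase \<Rightarrow> real"
  assumes "smooth_on \<Omega> f" "homogeneous lam f" "line_invariant f" "p \<in> TS"
  shows "John i j f p = rJohn i j f p - (lam + 1) * (snd p $ i * rX j f p - snd p $ j * rX i f p)"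
  unfolding John_def rJohn_def rX_rXi_eq_on_TS[OF assms] rX_eq_dx_on_TS[OF assms]
  by (simp add: algebra_simps)

lemma foldr_John_smooth_homogeneous_line_invariant:
  fixes \<psi> :: "'n::finite phase \<Rightarrow> real"
  assumes "smooth_on \<Omega> \<psi>" "homogeneous lam \<psi>" "line_invariant \<psi>"
  shows "smooth_on \<Omega> (foldr (\<lambda>l f. John (I l) (J l) f) ls \<psi>)
    \<and> homogeneous (lam - real (length ls)) (foldr (\<lambda>l f. John (I l) (J l) f) ls \<psi>)
    \<and> line_invariant (foldr (\<lambda>l f. John (I l) (J l) f) ls \<psi>)"
proof (induction ls)
  case Nil
  then show ?case
    using assms by simp
next
  case (Cons l ls)
  let ?F = "foldr (\<lambda>l f. John (I l) (J l) f) ls \<psi>"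
  have IH: "smooth_on \<Omega> ?F" "homogeneous (lam - real (length ls)) ?F" "line_invariant ?F"
    using Cons.IH by auto
  have "lam - real (length (l # ls)) = lam - real (length ls) - 1"
    by simp
  then show ?case
    using smooth_on_John[OF open_\<Omega> IH(1)] homogeneous_John[OF IH(1,2)] line_invariant_John[OF IH(1,3)]
    by (simp only: foldr_Cons o_apply)
qed

lemma foldr_John_eq_foldr_Dop_on_TS:
  fixes \<psi> :: "'n::finite phase \<Rightarrow> real"
  assumes sm: "smooth_on \<Omega> \<psi>" and hom: "homogeneous (real b - 3) \<psi>" and inv: "line_invariant \<psi>"
    and "a \<le> b"
  shows "\<forall>p\<in>TS. foldr (\<lambda>l f. John (I l) (J l) f) [a..<b] \<psi> p = foldr (\<lambda>l g. Dop I J l g) [a..<b] \<psi> p"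
  using \<open>a \<le> b\<close>
proof (induction a rule: inc_induct)
  case base
  then show ?case
    by simp
next
  case (step n)
  define F where "F = foldr (\<lambda>l f. John (I l) (J l) f) [Suc n..<b] \<psi>"
  define G where "G = foldr (\<lambda>l g. Dop I J l g) [Suc n..<b] \<psi>"
  have F: "smooth_on \<Omega> F" "homogeneous (real n - 2) F" "line_invariant F"
    using foldr_John_smooth_homogeneous_line_invariant[OF sm hom inv, of I J "[Suc n..<b]"] step(2)
    by (simp_all add: F_def of_nat_diff)
  have "John (I n) (J n) F p = Dop I J n G p" if "p \<in> TS" for p
  proof -
    have "John (I n) (J n) F p = Dop I J n F p"
      using John_eq_rJohn_on_TS[OF F that] unfolding Dop_def by (simp add: algebra_simps)
    also have "\<dots> = Dop I J n G p"
      using Dop_cong_TS[of F G] step(3) that TS_subset_\<Omega> unfolding F_def G_def by blast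
    finally show ?thesis .
  qed
  then show ?case
    using step(2) by (simp add: upt_conv_Cons F_def G_def)
qed

theorem corollary3p1:
  fixes \<psi> :: "(real^'n::finite) \<times> (real^'n) \<Rightarrow> real" and m :: nat
    and I J :: "nat \<Rightarrow> 'n"
  assumes smooth: "smooth_on (UNIV \<times> (UNIV - {0})) \<psi>"
    and homog: "\<And>x \<xi> c. \<xi> \<noteq> 0 \<Longrightarrow> c > 0 \<Longrightarrow>
                   \<psi> (x, c *\<^sub>R \<xi>) = c powr (real m - 1) * \<psi> (x, \<xi>)"
    and invar: "\<And>x \<xi> \<tau>. \<xi> \<noteq> 0 \<Longrightarrow> \<psi> (x + \<tau> *\<^sub>R \<xi>, \<xi>) = \<psi> (x, \<xi>)"
  shows "\<forall>p\<in>TS. foldr (\<lambda>l f. John (I l) (J l) f) [1..<m+2] \<psi> p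
                = foldr (\<lambda>l g. Dop I J l g) [1..<m+2] \<psi> p"
proof (rule foldr_John_eq_foldr_Dop_on_TS[OF smooth])
  show "homogeneous (real (m + 2) - 3) \<psi>"
    using homog unfolding homogeneous_def by simp
  show "line_invariant \<psi>"
    using invar unfolding line_invariant_def by blast
qed auto

end
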